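(* Let $P$ be an infinite field and $W=W(X)$ the free commutative or free associative (unital) algebra over $P$ on a finite set $X=\{x_1,\ldots,x_n\}$. Let $\mu:W\to W$ be a bijection such that $s\mapsto\mu s\mu^{-1}$ is an automorphism of the semigroup $\mathrm{End}(W)$, and suppose $\mu(0)=0$, $\mu(1)=1$ and $\mu(x_i)=x_i$ for all $i$. Then for all $u,v\in W$, $$\mu(u+v)=\mu(u)+\mu(v).$$
   Context: $\mathrm{End}(W)$ is the semigroup of all $P$-algebra endomorphisms of $W$. *)

theory Defs
  imports Main "HOL-Library.Poly_Mapping" "HOL-Library.Multiset"
begin

text \<open>With M = finite multisets over X
  (op = +, e = empty) this is the free commutative unital algebra P[X]; with
  M = words (lists) over X (op = append, e = Nil) it is the free associative
  unital algebra P<X>.\<close>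

definition malg_mult :: "('m \<Rightarrow> 'm \<Rightarrow> 'm) \<Rightarrow> ('m \<Rightarrow>\<^sub>0 'a::comm_ring_1) \<Rightarrow> ('m \<Rightarrow>\<^sub>0 'a) \<Rightarrow> ('m \<Rightarrow>\<^sub>0 'a)" where
  "malg_mult op p q =
     (\<Sum>m\<in>Poly_Mapping.keys p. \<Sum>m'\<in>Poly_Mapping.keys q. Poly_Mapping.single (op m m') (Poly_Mapping.lookup p m * Poly_Mapping.lookup q m'))"

definition malg_one :: "'m \<Rightarrow> ('m \<Rightarrow>\<^sub>0 'a::comm_ring_1)" where
  "malg_one e = Poly_Mapping.single e 1"

definition malg_smult :: "'a::comm_ring_1 \<Rightarrow> ('m \<Rightarrow>\<^sub>0 'a) \<Rightarrow> ('m \<Rightarrow>\<^sub>0 'a)" where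
  "malg_smult c p = Poly_Mapping.map (\<lambda>a. c * a) p"

definition malg_gen :: "('x \<Rightarrow> 'm) \<Rightarrow> 'x \<Rightarrow> ('m \<Rightarrow>\<^sub>0 'a::comm_ring_1)" where
  "malg_gen letter x = Poly_Mapping.single (letter x) 1"

definition malg_End :: "('m \<Rightarrow> 'm \<Rightarrow> 'm) \<Rightarrow> 'm \<Rightarrow> (('m \<Rightarrow>\<^sub>0 'a::comm_ring_1) \<Rightarrow> ('m \<Rightarrow>\<^sub>0 'a)) set" where
  "malg_End op e = {s.
      (\<forall>p q. s (p + q) = s p + s q) \<and>
      (\<forall>c p. s (malg_smult c p) = malg_smult c (s p)) \<and>
      (\<forall>p q. s (malg_mult op p q) = malg_mult op (s p) (s q)) \<and>
      s (malg_one e) = malg_one e}"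

end

theory Submission
  imports Defs "HOL-Computational_Algebra.Polynomial"
begin

text \<open>Conjugation by \<mu> sends an endomorphism s to the endomorphism determined by the values
  \<mu> (s x) on the generators, so \<mu> \<circ> s = t \<circ> \<mu> whenever \<mu> (s x) = t x for all generators x.
  Applied to the substitution x \<mapsto> 0 this shows that \<mu> permutes the constants by a bijection
  \<sigma> of P; applied to the projection of W onto P[x] it shows that \<mu> maps P[x] to itself, inducing
  a map \<psi> on P[t] that respects composition of polynomials.  Comparing compositions of linear
  polynomials shows \<mu> (c u) = \<sigma> c \<mu> u and that \<sigma> is a field automorphism.

  With two distinct generators x, y the scaling endomorphisms z \<mapsto> c z force \<mu> (x + y) to be
  homogeneous of degree one, the projections then identify it as x + y, and the substitution
  x \<mapsto> u, y \<mapsto> v gives \<mu> (u + v) = \<mu> u + \<mu> v.  With a single generator W = P[x] and \<psi>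
  applies \<sigma> coefficientwise, because both sides agree at every point of the infinite field.\<close>

lemma infinite_field_ex_power_neq_self:
  assumes "infinite (UNIV :: 'a::field set)" and "k \<noteq> 1"
  shows "\<exists>d::'a. d ^ k \<noteq> d"
proof (cases "k = 0")
  case True
  then show ?thesis by (intro exI[of _ 0]) simp
next
  case False
  with assms(2) have k: "k \<ge> 2" by simp
  let ?p = "monom (1::'a) k - [:0, 1:]"
  have "coeff ?p k = 1" using k by (simp add: coeff_monom coeff_pCons split: nat.splits)
  then have "?p \<noteq> 0" by (metis coeff_0 zero_neq_one)
  then have "finite {d. poly ?p d = 0}" by (rule poly_roots_finite)
  then obtain d where "poly ?p d \<noteq> 0" using assms(1)
    by (metis (mono_tags, lifting) UNIV_eq_I mem_Collect_eq)
  then show ?thesis by (intro exI[of _ d]) (simp add: poly_monom)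
qed

lemma degree_1_poly_eq: "degree (p::'a::comm_ring_1 poly) = 1 \<Longrightarrow> p = [:coeff p 0, coeff p 1:]"
  by (rule poly_eqI) (auto simp: coeff_pCons coeff_eq_0 split: nat.splits)

lemma map_poly_add:
  assumes "f 0 = 0" and "\<And>a b. f (a + b) = f a + f b"
  shows "map_poly f (p + q) = map_poly f p + map_poly f q"
  by (rule poly_eqI) (simp add: coeff_map_poly assms)

lemma poly_map_poly_hom:
  assumes "f 0 = 0" and "\<And>a b. f (a + b) = f a + f b" and "\<And>a b. f (a * b) = f a * f b"
  shows "f (poly q x) = poly (map_poly f q) (f x)"
  by (induction q) (simp_all add: map_poly_pCons assms)

subsection \<open>Monoid algebras as rings\<close>

abbreviation scalar :: "'a \<Rightarrow> ('m::monoid_add \<Rightarrow>\<^sub>0 'a::comm_ring_1)" where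
  "scalar c \<equiv> Poly_Mapping.single 0 c"

lemma sum_single_lookup:
  "(\<Sum>m\<in>Poly_Mapping.keys p. Poly_Mapping.single m (Poly_Mapping.lookup p m)) = p"
  by (rule poly_mapping_eqI) (simp add: lookup_sum lookup_single when_def in_keys_iff)

lemma sum_single: "(\<Sum>a\<in>A. Poly_Mapping.single m (f a)) = Poly_Mapping.single m (sum f A)"
  by (induction A rule: infinite_finite_induct) (simp_all add: single_add)

lemma malg_mult_plus_eq_times: "malg_mult (+) p q = p * (q :: 'm::monoid_add \<Rightarrow>\<^sub>0 'a::comm_ring_1)"
proof -
  let ?P = "Poly_Mapping.keys p" and ?Q = "Poly_Mapping.keys q"
  have "p * q = (\<Sum>m\<in>?P. Poly_Mapping.single m (Poly_Mapping.lookup p m)) *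
      (\<Sum>m\<in>?Q. Poly_Mapping.single m (Poly_Mapping.lookup q m))"
    by (simp only: sum_single_lookup)
  also have "\<dots> = malg_mult (+) p q"
    by (simp add: malg_mult_def sum_distrib_left sum_distrib_right mult_single sum.swap[of _ ?Q])
  finally show ?thesis by simp
qed

lemma malg_smult_eq_scalar_mult: "malg_smult c p = scalar c * (p :: 'm::monoid_add \<Rightarrow>\<^sub>0 'a::comm_ring_1)"
  by (simp add: malg_smult_def mult_map_scale_conv_mult)

lemma lookup_scalar_mult:
  "Poly_Mapping.lookup (scalar c * p) m = c * Poly_Mapping.lookup (p :: 'm::monoid_add \<Rightarrow>\<^sub>0 'a::comm_ring_1) m"
  by (simp add: mult_map_scale_conv_mult[symmetric] map.rep_eq when_def)

lemma scalar_inject: "scalar a = (scalar b :: 'm::monoid_add \<Rightarrow>\<^sub>0 'a::comm_ring_1) \<longleftrightarrow> a = b"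
  using lookup_single_eq by metis

lemma scalar_commute: "scalar c * p = p * (scalar c :: 'm::monoid_add \<Rightarrow>\<^sub>0 'a::comm_ring_1)"
proof -
  let ?e = "\<lambda>m. Poly_Mapping.single m (Poly_Mapping.lookup p m)"
  have "scalar c * (\<Sum>m\<in>Poly_Mapping.keys p. ?e m) = (\<Sum>m\<in>Poly_Mapping.keys p. ?e m) * scalar c"
    by (simp add: sum_distrib_left sum_distrib_right mult_single mult.commute)
  then show ?thesis by (simp only: sum_single_lookup)
qed

lemma scalar_mult_mult_scalar_mult:
  "(scalar a * p) * (scalar b * q) = scalar (a * b) * (p * (q :: 'm::monoid_add \<Rightarrow>\<^sub>0 'a::comm_ring_1))"
proof -
  have "(scalar a * p) * (scalar b * q) = scalar a * (p * scalar b) * q" by (simp only: mult.assoc)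
  also have "\<dots> = scalar a * (scalar b * p) * q" by (simp only: scalar_commute[of b p])
  also have "\<dots> = (scalar a * scalar b) * (p * q)" by (simp only: mult.assoc)
  finally show ?thesis by (simp add: mult_single)
qed

definition alg_End :: "(('m::monoid_add \<Rightarrow>\<^sub>0 'a::comm_ring_1) \<Rightarrow> ('m \<Rightarrow>\<^sub>0 'a)) set" where
  "alg_End = {s. (\<forall>p q. s (p + q) = s p + s q) \<and> (\<forall>c p. s (scalar c * p) = scalar c * s p) \<and>
      (\<forall>p q. s (p * q) = s p * s q) \<and> s 1 = 1}"

lemma malg_End_eq_alg_End: "malg_End (+) 0 = alg_End"
  by (simp add: malg_End_def alg_End_def malg_mult_plus_eq_times malg_smult_eq_scalar_mult malg_one_def)

lemma id_in_alg_End: "id \<in> alg_End"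
  by (simp add: alg_End_def)

context
  fixes s :: "('m::monoid_add \<Rightarrow>\<^sub>0 'a::comm_ring_1) \<Rightarrow> ('m \<Rightarrow>\<^sub>0 'a)"
  assumes s: "s \<in> alg_End"
begin

lemma alg_End_add: "s (p + q) = s p + s q"
  using s unfolding alg_End_def by blast

lemma alg_End_scalar_mult: "s (scalar c * p) = scalar c * s p"
  using s unfolding alg_End_def by blast

lemma alg_End_mult: "s (p * q) = s p * s q"
  using s unfolding alg_End_def by blast

lemma alg_End_one: "s 1 = 1"
  using s unfolding alg_End_def by blast

lemma alg_End_zero: "s 0 = 0"
  using alg_End_add[of 0 0] by simp

lemma alg_End_scalar: "s (scalar c) = scalar c"
  using alg_End_scalar_mult[of c 1] by (simp add: alg_End_one)

lemma alg_End_sum: "s (sum f A) = (\<Sum>a\<in>A. s (f a))"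
  by (induction A rule: infinite_finite_induct) (simp_all add: alg_End_zero alg_End_add)

lemma alg_End_prod_list: "s (prod_list ps) = prod_list (map s ps)"
  by (induction ps) (simp_all add: alg_End_one alg_End_mult)

end

subsection \<open>Monoid algebras generated by letters\<close>

locale free_monoid_algebra =
  fixes letter :: "'x \<Rightarrow> 'm::monoid_add"
  assumes words_generate: "\<And>m. \<exists>ws. m = sum_list (map letter ws)"
    and inj_letter: "inj letter"
    and letter_powers_inject:
      "\<And>x k j. sum_list (replicate k (letter x)) = sum_list (replicate j (letter x)) \<Longrightarrow> k = j"
begin

abbreviation gen :: "'x \<Rightarrow> ('m \<Rightarrow>\<^sub>0 'a::comm_ring_1)" where
  "gen \<equiv> malg_gen letter"

text \<open>word m is just some spelling of m, so subst f below is multiplicative only when products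
  of the f x along spellings are (hypothesis of subst_in_alg_EndI).\<close>

definition word :: "'m \<Rightarrow> 'x list" where
  "word m = (SOME ws. m = sum_list (map letter ws))"

lemma sum_list_word: "sum_list (map letter (word m)) = m"
  unfolding word_def by (metis (mono_tags, lifting) someI_ex words_generate)

lemma prod_list_gen: "prod_list (map gen ws) = Poly_Mapping.single (sum_list (map letter ws)) 1"
  by (induction ws) (simp_all add: malg_gen_def mult_single)

lemma single_eq_scalar_mult_word: "Poly_Mapping.single m c = scalar c * prod_list (map gen (word m))"
  by (simp add: prod_list_gen sum_list_word mult_single)

definition subst :: "('x \<Rightarrow> ('m \<Rightarrow>\<^sub>0 'a::comm_ring_1)) \<Rightarrow> ('m \<Rightarrow>\<^sub>0 'a) \<Rightarrow> ('m \<Rightarrow>\<^sub>0 'a)" where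
  "subst f p = (\<Sum>m\<in>Poly_Mapping.keys p. scalar (Poly_Mapping.lookup p m) * prod_list (map f (word m)))"

lemma alg_End_eq_subst:
  assumes s: "s \<in> alg_End"
  shows "s p = subst (s \<circ> gen) p"
proof -
  have "s p = s (\<Sum>m\<in>Poly_Mapping.keys p. Poly_Mapping.single m (Poly_Mapping.lookup p m))"
    by (simp only: sum_single_lookup)
  also have "\<dots> = subst (s \<circ> gen) p"
    unfolding subst_def alg_End_sum[OF s]
  proof (intro sum.cong refl)
    fix m
    let ?c = "Poly_Mapping.lookup p m"
    have "s (Poly_Mapping.single m ?c) = s (scalar ?c * prod_list (map gen (word m)))"
      by (simp only: single_eq_scalar_mult_word[of m ?c])
    then show "s (Poly_Mapping.single m ?c) = scalar ?c * prod_list (map (s \<circ> gen) (word m))"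
      by (simp add: alg_End_scalar_mult[OF s] alg_End_prod_list[OF s])
  qed
  finally show ?thesis .
qed

lemma alg_End_eqI:
  assumes "s \<in> alg_End" and "t \<in> alg_End" and "\<And>x. s (gen x) = t (gen x)"
  shows "s = t"
proof
  fix p
  have "s \<circ> gen = t \<circ> gen" using assms(3) by auto
  then show "s p = t p"
    using alg_End_eq_subst[OF assms(1), of p] alg_End_eq_subst[OF assms(2), of p] by simp
qed

lemma subst_add: "subst f (p + q) = subst f p + subst f q"
  unfolding subst_def by (rule setsum_keys_plus_distrib) (simp_all add: distrib_right single_add)

lemma subst_zero: "subst f 0 = 0"
  by (simp add: subst_def)

lemma subst_sum: "subst f (sum g A) = (\<Sum>a\<in>A. subst f (g a))"
  by (induction A rule: infinite_finite_induct) (simp_all add: subst_zero subst_add)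

lemma subst_single: "subst f (Poly_Mapping.single m c) = scalar c * prod_list (map f (word m))"
  by (simp add: subst_def)

lemma subst_mult:
  assumes hom: "\<And>m m'. prod_list (map f (word (m + m'))) = prod_list (map f (word m)) * prod_list (map f (word m'))"
  shows "subst f (p * q) = subst f p * subst f q"
proof -
  let ?P = "Poly_Mapping.keys p" and ?Q = "Poly_Mapping.keys q"
  let ?p = "Poly_Mapping.lookup p" and ?q = "Poly_Mapping.lookup q"
  let ?F = "\<lambda>m. prod_list (map f (word m))"
  have "p * q = (\<Sum>m\<in>?P. Poly_Mapping.single m (?p m)) * (\<Sum>m\<in>?Q. Poly_Mapping.single m (?q m))"
    by (simp only: sum_single_lookup)
  also have "\<dots> = (\<Sum>m\<in>?P. \<Sum>m'\<in>?Q. Poly_Mapping.single (m + m') (?p m * ?q m'))"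
    by (simp add: sum_distrib_left sum_distrib_right mult_single sum.swap[of _ ?Q])
  finally have "subst f (p * q) = (\<Sum>m\<in>?P. \<Sum>m'\<in>?Q. scalar (?p m * ?q m') * ?F (m + m'))"
    by (simp add: subst_sum subst_single)
  also have "\<dots> = (\<Sum>m\<in>?P. \<Sum>m'\<in>?Q. (scalar (?p m) * ?F m) * (scalar (?q m') * ?F m'))"
    by (simp only: hom scalar_mult_mult_scalar_mult)
  also have "\<dots> = subst f p * subst f q"
    by (simp add: subst_def sum_distrib_left sum_distrib_right sum.swap[of _ ?Q])
  finally show ?thesis .
qed

lemma subst_in_alg_EndI:
  assumes "\<And>m m'. prod_list (map f (word (m + m'))) = prod_list (map f (word m)) * prod_list (map f (word m'))"
    and "prod_list (map f (word 0)) = 1"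
  shows "subst f \<in> alg_End"
proof -
  have "subst f (scalar c) = scalar c" for c
    using assms(2) by (simp add: subst_single)
  then have "subst f (scalar c * p) = scalar c * subst f p" for c p
    by (simp add: subst_mult[OF assms(1)])
  moreover have "subst f 1 = 1"
    using \<open>subst f (scalar 1) = scalar 1\<close> by simp
  ultimately show ?thesis
    unfolding alg_End_def using subst_add subst_mult[OF assms(1)] by blast
qed

definition letter_power :: "'x \<Rightarrow> nat \<Rightarrow> 'm" where
  "letter_power x k = sum_list (replicate k (letter x))"

definition poly_at_gen :: "'x \<Rightarrow> 'a::comm_ring_1 poly \<Rightarrow> ('m \<Rightarrow>\<^sub>0 'a)" where
  "poly_at_gen x q = (\<Sum>k\<le>degree q. Poly_Mapping.single (letter_power x k) (coeff q k))"

lemma poly_at_gen_bound: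
  assumes "degree q \<le> N"
  shows "poly_at_gen x q = (\<Sum>k\<le>N. Poly_Mapping.single (letter_power x k) (coeff q k))"
  unfolding poly_at_gen_def
  by (rule sum.mono_neutral_left) (use assms in \<open>auto simp: coeff_eq_0\<close>)

lemma lookup_poly_at_gen: "Poly_Mapping.lookup (poly_at_gen x q) (letter_power x k) = coeff q k"
proof -
  let ?N = "max k (degree q)"
  have "Poly_Mapping.lookup (poly_at_gen x q) (letter_power x k)
      = (\<Sum>j\<le>?N. (coeff q j when letter_power x j = letter_power x k))"
    by (simp add: poly_at_gen_bound[of q ?N] lookup_sum lookup_single)
  also have "\<dots> = (\<Sum>j\<le>?N. (if j = k then coeff q j else 0))"
    by (intro sum.cong refl) (auto simp: when_def letter_power_def dest: letter_powers_inject)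
  finally show ?thesis by simp
qed

lemma poly_at_gen_inject: "poly_at_gen x q = poly_at_gen x r \<Longrightarrow> q = r"
  by (metis lookup_poly_at_gen poly_eqI)

lemma poly_at_gen_add: "poly_at_gen x (q + r) = poly_at_gen x q + poly_at_gen x r"
proof -
  let ?N = "max (degree q) (degree r)"
  have "poly_at_gen x (q + r) = (\<Sum>k\<le>?N. Poly_Mapping.single (letter_power x k) (coeff (q + r) k))"
    by (rule poly_at_gen_bound) (simp add: degree_add_le)
  also have "\<dots> = poly_at_gen x q + poly_at_gen x r"
    by (simp add: single_add sum.distrib poly_at_gen_bound[of _ ?N])
  finally show ?thesis .
qed

lemma poly_at_gen_0: "poly_at_gen x 0 = 0"
  by (simp add: poly_at_gen_def)

lemma poly_at_gen_const: "poly_at_gen x [:c:] = scalar c"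
  by (simp add: poly_at_gen_def letter_power_def)

lemma poly_at_gen_smult: "poly_at_gen x (smult a q) = scalar a * poly_at_gen x q"
proof -
  have "poly_at_gen x (smult a q) =
      (\<Sum>k\<le>degree q. Poly_Mapping.single (letter_power x k) (coeff (smult a q) k))"
    by (rule poly_at_gen_bound) (simp add: degree_smult_le)
  also have "\<dots> = scalar a * poly_at_gen x q"
    by (simp add: poly_at_gen_def sum_distrib_left mult_single)
  finally show ?thesis .
qed

lemma poly_at_gen_pCons: "poly_at_gen x (pCons a q) = scalar a + gen x * poly_at_gen x q"
proof -
  have "poly_at_gen x (pCons a q) =
      (\<Sum>k\<le>Suc (degree q). Poly_Mapping.single (letter_power x k) (coeff (pCons a q) k))"
    by (rule poly_at_gen_bound) (simp add: degree_pCons_le)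
  also have "\<dots> = scalar a + (\<Sum>k\<le>degree q. Poly_Mapping.single (letter_power x (Suc k)) (coeff q k))"
    by (subst sum.atMost_Suc_shift) (simp add: letter_power_def)
  also have "\<dots> = scalar a + gen x * poly_at_gen x q"
    by (simp add: poly_at_gen_def sum_distrib_left malg_gen_def mult_single letter_power_def)
  finally show ?thesis .
qed

lemma poly_at_gen_mult: "poly_at_gen x (q * r) = poly_at_gen x q * poly_at_gen x r"
proof (induction q)
  case 0
  then show ?case by (simp add: poly_at_gen_0)
next
  case (pCons a q)
  have "poly_at_gen x (pCons a q * r) = scalar a * poly_at_gen x r + gen x * poly_at_gen x (q * r)"
    by (simp add: poly_at_gen_add poly_at_gen_smult poly_at_gen_pCons[of x 0, simplified])
  also have "\<dots> = poly_at_gen x (pCons a q) * poly_at_gen x r"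
    by (simp add: pCons.IH poly_at_gen_pCons distrib_right mult.assoc)
  finally show ?case .
qed

lemma poly_at_gen_X: "poly_at_gen x [:0, 1:] = gen x"
  by (simp add: poly_at_gen_pCons poly_at_gen_const poly_at_gen_0)

lemma poly_at_gen_linear: "poly_at_gen x [:0, c:] = scalar c * gen x"
  by (simp add: poly_at_gen_pCons poly_at_gen_const poly_at_gen_0 scalar_commute[of c "gen x"])

lemma poly_at_gen_sum: "poly_at_gen x (sum f A) = (\<Sum>a\<in>A. poly_at_gen x (f a))"
  by (induction A rule: infinite_finite_induct) (simp_all add: poly_at_gen_0 poly_at_gen_add)

lemma poly_at_gen_1: "poly_at_gen x 1 = 1"
  using poly_at_gen_const[of x 1] by (simp add: one_pCons)

lemma poly_at_gen_prod_list: "poly_at_gen x (prod_list qs) = prod_list (map (poly_at_gen x) qs)"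
  by (induction qs) (simp_all add: poly_at_gen_mult poly_at_gen_1)

lemma alg_End_poly_at_gen:
  assumes s: "s \<in> alg_End" and "s (gen x) = poly_at_gen x r"
  shows "s (poly_at_gen x q) = poly_at_gen x (pcompose q r)"
proof (induction q)
  case 0
  then show ?case by (simp add: poly_at_gen_0 alg_End_zero[OF s])
next
  case (pCons a q)
  then show ?case
    by (simp add: poly_at_gen_pCons alg_End_add[OF s] alg_End_mult[OF s] alg_End_scalar[OF s] assms(2)
        pcompose_pCons poly_at_gen_add poly_at_gen_const poly_at_gen_mult poly_at_gen_0)
qed

lemma subst_in_range_poly_at_gen:
  assumes "\<And>y. f y \<in> range (poly_at_gen x)"
  shows "subst f p \<in> range (poly_at_gen x)"
proof -
  define g where "g y = inv (poly_at_gen x) (f y)" for y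
  have f: "f = poly_at_gen x \<circ> g"
    using assms by (simp add: fun_eq_iff g_def f_inv_into_f)
  have "subst f p = poly_at_gen x
      (\<Sum>m\<in>Poly_Mapping.keys p. smult (Poly_Mapping.lookup p m) (prod_list (map g (word m))))"
    by (simp add: subst_def f poly_at_gen_sum poly_at_gen_smult poly_at_gen_prod_list)
  then show ?thesis by blast
qed

end

subsection \<open>Bijections whose conjugation preserves the endomorphisms\<close>

locale End_conjugation = free_monoid_algebra letter
  for letter :: "'x \<Rightarrow> 'm::monoid_add" +
  fixes \<mu> :: "('m \<Rightarrow>\<^sub>0 'a::field) \<Rightarrow> ('m \<Rightarrow>\<^sub>0 'a)"
  assumes substitution_exists: "\<And>f::'x \<Rightarrow> ('m \<Rightarrow>\<^sub>0 'a). \<exists>s\<in>alg_End. \<forall>x. s (gen x) = f x"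
    and infinite_field: "infinite (UNIV :: 'a set)"
    and bij_\<mu>: "bij \<mu>"
    and conj_in_alg_End: "\<And>s. s \<in> alg_End \<Longrightarrow> \<mu> \<circ> s \<circ> inv \<mu> \<in> alg_End"
    and \<mu>_0: "\<mu> 0 = 0"
    and \<mu>_1: "\<mu> 1 = 1"
    and \<mu>_gen: "\<And>x. \<mu> (gen x) = gen x"
begin

lemma
  fixes f :: "'x \<Rightarrow> ('m \<Rightarrow>\<^sub>0 'a)"
  shows subst_in_alg_End: "subst f \<in> alg_End"
    and subst_gen: "subst f (gen x) = f x"
proof -
  obtain s where s: "s \<in> alg_End" "\<And>x. s (gen x) = f x"
    using substitution_exists[of f] by blast
  then have "s \<circ> gen = f"
    by (simp add: fun_eq_iff)
  then have "s p = subst f p" for p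
    using alg_End_eq_subst[OF s(1), of p] by simp
  then have "s = subst f" ..
  then show "subst f \<in> alg_End" "subst f (gen x) = f x"
    using s by auto
qed

lemma \<mu>_intertwines:
  assumes s: "s \<in> alg_End" and t: "t \<in> alg_End" and st: "\<And>x. \<mu> (s (gen x)) = t (gen x)"
  shows "\<mu> (s p) = t (\<mu> p)"
proof -
  have inv_\<mu>: "inv \<mu> (\<mu> q) = q" for q
    using bij_\<mu> by (simp add: bij_is_inj)
  have conj: "\<mu> \<circ> s \<circ> inv \<mu> = t"
  proof (rule alg_End_eqI[OF conj_in_alg_End[OF s] t])
    show "(\<mu> \<circ> s \<circ> inv \<mu>) (gen x) = t (gen x)" for x
      using inv_\<mu>[of "gen x"] by (simp add: \<mu>_gen st)
  qed
  show ?thesis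
    using fun_cong[OF conj, of "\<mu> p"] by (simp add: inv_\<mu>)
qed

lemma subst_at_zero_in_range_scalar: "subst (\<lambda>_. 0) p \<in> range scalar"
proof -
  have zero_word: "prod_list (map (\<lambda>_. 0) ws) = scalar (if ws = [] then 1 else 0)" for ws :: "'x list"
    by (cases ws) simp_all
  have "subst (\<lambda>_. 0) p = (\<Sum>m\<in>Poly_Mapping.keys p.
      scalar (Poly_Mapping.lookup p m * (if word m = [] then 1 else 0)))"
    unfolding subst_def zero_word mult_single by simp
  then show ?thesis by (simp add: sum_single)
qed

lemma \<mu>_subst_at_zero: "\<mu> (subst (\<lambda>_. 0) p) = subst (\<lambda>_. 0) (\<mu> p)"
  by (rule \<mu>_intertwines) (simp_all add: subst_in_alg_End subst_gen \<mu>_0)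

definition \<sigma> :: "'a \<Rightarrow> 'a" where
  "\<sigma> c = Poly_Mapping.lookup (\<mu> (scalar c)) 0"

lemma \<mu>_scalar: "\<mu> (scalar c) = scalar (\<sigma> c)"
proof -
  have "\<mu> (scalar c) = subst (\<lambda>_. 0) (\<mu> (scalar c))"
    using \<mu>_subst_at_zero[of "scalar c"] by (simp add: alg_End_scalar[OF subst_in_alg_End])
  then obtain d where "\<mu> (scalar c) = scalar d"
    using subst_at_zero_in_range_scalar[of "\<mu> (scalar c)"] by auto
  then show ?thesis by (simp add: \<sigma>_def)
qed

lemma inj_\<sigma>: "inj \<sigma>"
proof (rule injI)
  fix a b
  assume "\<sigma> a = \<sigma> b"
  then have "\<mu> (scalar a) = \<mu> (scalar b)"
    by (simp add: \<mu>_scalar)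
  then show "a = b"
    using bij_\<mu> by (simp add: bij_is_inj inj_eq scalar_inject)
qed

lemma surj_\<sigma>: "surj \<sigma>"
proof -
  have "d \<in> range \<sigma>" for d
  proof -
    let ?p = "inv \<mu> (scalar d)"
    obtain c where c: "subst (\<lambda>_. 0) ?p = scalar c"
      using subst_at_zero_in_range_scalar[of ?p] by auto
    have "\<mu> (scalar c) = scalar d"
      using \<mu>_subst_at_zero[of ?p] bij_\<mu> by (simp add: c bij_is_surj surj_f_inv_f alg_End_scalar[OF subst_in_alg_End])
    then have "d = \<sigma> c" by (simp add: \<mu>_scalar scalar_inject)
    then show ?thesis by (rule range_eqI)
  qed
  then show ?thesis by blast
qed

lemma \<sigma>_0: "\<sigma> 0 = 0"
  by (simp add: \<sigma>_def \<mu>_0)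

lemma \<sigma>_1: "\<sigma> 1 = 1"
  by (simp add: \<sigma>_def \<mu>_1)

definition proj :: "'x \<Rightarrow> ('m \<Rightarrow>\<^sub>0 'a) \<Rightarrow> ('m \<Rightarrow>\<^sub>0 'a)" where
  "proj x0 = subst (\<lambda>y. if y = x0 then gen x0 else 0)"

lemma proj_in_alg_End: "proj x0 \<in> alg_End"
  by (simp add: proj_def subst_in_alg_End subst_gen)

lemma proj_gen: "proj x0 (gen y) = (if y = x0 then gen x0 else 0)"
  by (simp add: proj_def subst_in_alg_End subst_gen)

lemma \<mu>_proj: "\<mu> (proj x0 p) = proj x0 (\<mu> p)"
  by (rule \<mu>_intertwines) (simp_all add: proj_in_alg_End proj_gen \<mu>_0 \<mu>_gen)

lemma proj_in_range_poly_at_gen: "proj x0 p \<in> range (poly_at_gen x0)"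
proof -
  have "(gen x0 :: 'm \<Rightarrow>\<^sub>0 'a) \<in> range (poly_at_gen x0)"
    by (rule range_eqI[where x = "[:0, 1:]"]) (simp add: poly_at_gen_X)
  moreover have "(0 :: 'm \<Rightarrow>\<^sub>0 'a) \<in> range (poly_at_gen x0)"
    by (rule range_eqI[where x = 0]) (simp add: poly_at_gen_0)
  ultimately have "(if y = x0 then gen x0 else 0 :: 'm \<Rightarrow>\<^sub>0 'a) \<in> range (poly_at_gen x0)" for y
    by simp
  then show ?thesis
    unfolding proj_def by (rule subst_in_range_poly_at_gen)
qed

lemma \<mu>_poly_at_gen_in_range: "\<mu> (poly_at_gen x0 q) \<in> range (poly_at_gen x0)"
proof -
  have "proj x0 (poly_at_gen x0 q) = poly_at_gen x0 q"
    using alg_End_poly_at_gen[OF proj_in_alg_End, of x0 x0 "[:0, 1:]"] by (simp add: proj_gen poly_at_gen_X)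
  then show ?thesis
    using \<mu>_proj[of x0 "poly_at_gen x0 q"] proj_in_range_poly_at_gen[of x0 "\<mu> (poly_at_gen x0 q)"] by simp
qed

definition \<psi> :: "'x \<Rightarrow> 'a poly \<Rightarrow> 'a poly" where
  "\<psi> x0 q = inv (poly_at_gen x0) (\<mu> (poly_at_gen x0 q))"

lemma \<mu>_poly_at_gen: "\<mu> (poly_at_gen x0 q) = poly_at_gen x0 (\<psi> x0 q)"
  unfolding \<psi>_def by (rule f_inv_into_f[OF \<mu>_poly_at_gen_in_range, symmetric])

lemma \<psi>_pcompose: "\<psi> x0 (pcompose q r) = pcompose (\<psi> x0 q) (\<psi> x0 r)"
proof -
  let ?s = "subst (\<lambda>_. poly_at_gen x0 r)" and ?t = "subst (\<lambda>_. poly_at_gen x0 (\<psi> x0 r))"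
  have "\<mu> (?s p) = ?t (\<mu> p)" for p
    by (rule \<mu>_intertwines) (simp_all add: subst_in_alg_End subst_gen \<mu>_poly_at_gen)
  from this[of "poly_at_gen x0 q"]
  have "poly_at_gen x0 (\<psi> x0 (pcompose q r)) = poly_at_gen x0 (pcompose (\<psi> x0 q) (\<psi> x0 r))"
    by (simp add: \<mu>_poly_at_gen alg_End_poly_at_gen[OF subst_in_alg_End] subst_gen)
  then show ?thesis by (rule poly_at_gen_inject)
qed

lemma \<psi>_X: "\<psi> x0 [:0, 1:] = [:0, 1:]"
  using \<mu>_poly_at_gen[of x0 "[:0, 1:]"] by (intro poly_at_gen_inject[of x0]) (simp add: poly_at_gen_X \<mu>_gen)

lemma \<psi>_const: "\<psi> x0 [:c:] = [:\<sigma> c:]"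
  using \<mu>_poly_at_gen[of x0 "[:c:]"] by (intro poly_at_gen_inject[of x0]) (simp add: poly_at_gen_const \<mu>_scalar)

lemma \<sigma>_poly: "\<sigma> (poly q a) = poly (\<psi> x0 q) (\<sigma> a)"
  using \<psi>_pcompose[of x0 q "[:a:]"] by (simp add: pcompose_pCons_0 \<psi>_const)

lemma degree_\<psi>:
  assumes "degree q = 1"
  shows "degree (\<psi> x0 q) = 1"
proof -
  obtain b c where q: "q = [:b, c:]" and "c \<noteq> 0"
    using degree_1_poly_eq[OF assms] assms by (metis degree_pCons_0 pCons_0_0 zero_neq_one)
  define r where "r = [:- b / c, 1 / c:]"
  have "pcompose q r = [:0, 1:]"
    using q \<open>c \<noteq> 0\<close> by (simp add: r_def pcompose_pCons field_simps)
  then have "degree (pcompose (\<psi> x0 q) (\<psi> x0 r)) = 1"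
    by (simp add: \<psi>_pcompose[symmetric] \<psi>_X)
  then show ?thesis
    by (simp add: degree_pcompose)
qed

lemma \<psi>_of_degree_1:
  assumes "degree q = 1"
  shows "\<psi> x0 q = [:\<sigma> (poly q 0), \<sigma> (poly q 1) - \<sigma> (poly q 0):]"
proof -
  let ?r = "\<psi> x0 q"
  have r: "?r = [:coeff ?r 0, coeff ?r 1:]"
    by (rule degree_1_poly_eq[OF degree_\<psi>[OF assms]])
  have c0: "coeff ?r 0 = \<sigma> (poly q 0)"
    using \<sigma>_poly[of q 0 x0] by (simp add: \<sigma>_0 poly_0_coeff_0)
  have "poly ?r 1 = coeff ?r 0 + coeff ?r 1"
    by (subst r) simp
  then have c1: "coeff ?r 1 = \<sigma> (poly q 1) - \<sigma> (poly q 0)"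
    using \<sigma>_poly[of q 1 x0] by (simp add: \<sigma>_1 c0)
  show ?thesis
    using c0 c1 by (subst r) simp
qed

lemma \<psi>_scaling: "\<psi> x0 [:0, c:] = [:0, \<sigma> c:]"
proof (cases "c = 0")
  case True
  then show ?thesis using \<psi>_const[of x0 0] by (simp add: \<sigma>_0)
next
  case False
  then show ?thesis by (simp add: \<psi>_of_degree_1 \<sigma>_0)
qed

lemma \<mu>_scalar_mult_gen: "\<mu> (scalar c * gen x0) = scalar (\<sigma> c) * gen x0"
  using \<mu>_poly_at_gen[of x0 "[:0, c:]"] by (simp add: \<psi>_scaling poly_at_gen_linear)

lemma \<mu>_scalar_mult: "\<mu> (scalar c * p) = scalar (\<sigma> c) * \<mu> p"
proof -
  fix x0 :: 'x
  let ?s = "subst (\<lambda>_. p)" and ?t = "subst (\<lambda>_. \<mu> p)"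
  have "\<mu> (?s q) = ?t (\<mu> q)" for q
    by (rule \<mu>_intertwines) (simp_all add: subst_in_alg_End subst_gen)
  from this[of "scalar c * gen x0"] show ?thesis
    by (simp add: \<mu>_scalar_mult_gen alg_End_scalar_mult[OF subst_in_alg_End] subst_gen)
qed

lemma \<sigma>_mult: "\<sigma> (a * b) = \<sigma> a * \<sigma> b"
  using \<mu>_scalar_mult[of a "scalar b"] by (simp add: \<mu>_scalar mult_single scalar_inject)

lemma \<psi>_smult: "\<psi> x0 (smult a q) = smult (\<sigma> a) (\<psi> x0 q)"
  using \<mu>_poly_at_gen[of x0 "smult a q"]
  by (intro poly_at_gen_inject[of x0]) (simp add: poly_at_gen_smult \<mu>_scalar_mult \<mu>_poly_at_gen)

definition slope :: "'a \<Rightarrow> 'a" where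
  "slope t = \<sigma> (t + 1) - \<sigma> t"

lemma \<psi>_translation: "\<psi> x0 [:t, 1:] = [:\<sigma> t, slope t:]"
  by (simp add: \<psi>_of_degree_1 slope_def add.commute)

lemma slope_mult:
  assumes "a \<noteq> 0"
  shows "slope (a * t) = slope t"
proof -
  fix x0 :: 'x
  have "\<psi> x0 (smult a [:t, 1:]) = \<psi> x0 (pcompose [:a * t, 1:] [:0, a:])"
    by (simp add: pcompose_pCons)
  then have "smult (\<sigma> a) [:\<sigma> t, slope t:] = pcompose [:\<sigma> (a * t), slope (a * t):] [:0, \<sigma> a:]"
    by (simp only: \<psi>_smult \<psi>_pcompose \<psi>_scaling \<psi>_translation)
  then have "\<sigma> a * slope t = slope (a * t) * \<sigma> a"
    by (simp add: pcompose_pCons)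
  moreover have "\<sigma> a \<noteq> 0"
    using inj_eq[OF inj_\<sigma>, of a 0] assms \<sigma>_0 by simp
  ultimately show ?thesis by simp
qed

lemma translations_commute: "\<sigma> t + slope t * \<sigma> t' = \<sigma> t' + slope t' * \<sigma> t"
proof -
  fix x0 :: 'x
  have "\<psi> x0 (pcompose [:t, 1:] [:t', 1:]) = \<psi> x0 (pcompose [:t', 1:] [:t, 1:])"
    by (simp add: pcompose_pCons add.commute)
  then have "pcompose [:\<sigma> t, slope t:] [:\<sigma> t', slope t':] = pcompose [:\<sigma> t', slope t':] [:\<sigma> t, slope t:]"
    by (simp only: \<psi>_pcompose \<psi>_translation)
  then show ?thesis
    by (simp add: pcompose_pCons)
qed

lemma slope_eq_1: "slope t = 1"
proof -
  obtain c :: 'a where c: "c \<notin> {0, 1}"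
    using ex_new_if_finite[OF infinite_field, of "{0, 1}"] by auto
  have "(slope 1 - 1) * (\<sigma> c - 1) = 0"
    using translations_commute[of 1 c] slope_mult[of c 1] c \<sigma>_1 by (simp add: algebra_simps)
  moreover have "\<sigma> c \<noteq> 1"
    using inj_eq[OF inj_\<sigma>, of c 1] c \<sigma>_1 by simp
  ultimately have "slope 1 = 1" by simp
  moreover have "slope 0 = 1"
    by (simp add: slope_def \<sigma>_0 \<sigma>_1)
  ultimately show ?thesis
    using slope_mult[of t 1] by (cases "t = 0") simp_all
qed

lemma \<sigma>_add: "\<sigma> (a + b) = \<sigma> a + \<sigma> b"
proof -
  have "\<sigma> (b + a) = \<sigma> b + \<sigma> a"
    using \<sigma>_poly[of "[:b, 1:]" a] by (simp add: \<psi>_translation slope_eq_1)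
  then show ?thesis by (simp add: add.commute)
qed

lemma \<psi>_eq_map_poly: "\<psi> x0 q = map_poly \<sigma> q"
proof -
  let ?d = "\<psi> x0 q - map_poly \<sigma> q"
  have at_\<sigma>: "poly ?d (\<sigma> a) = 0" for a
    using \<sigma>_poly[of q a x0] poly_map_poly_hom[of \<sigma> q a, OF \<sigma>_0 \<sigma>_add \<sigma>_mult] by simp
  have "poly ?d z = 0" for z
    using surjD[OF surj_\<sigma>, of z] at_\<sigma> by auto
  then have "?d = 0"
    using poly_roots_finite[of ?d] infinite_field by auto
  then show ?thesis by simp
qed

definition scale :: "'a \<Rightarrow> ('m \<Rightarrow>\<^sub>0 'a) \<Rightarrow> ('m \<Rightarrow>\<^sub>0 'a)" where
  "scale d = subst (\<lambda>y. scalar d * gen y)"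

lemma scale_in_alg_End: "scale d \<in> alg_End"
  by (simp add: scale_def subst_in_alg_End subst_gen)

lemma scale_gen: "scale d (gen y) = scalar d * gen y"
  by (simp add: scale_def subst_in_alg_End subst_gen)

lemma \<mu>_scale: "\<mu> (scale c p) = scale (\<sigma> c) (\<mu> p)"
  by (rule \<mu>_intertwines) (simp_all add: scale_in_alg_End scale_gen \<mu>_scalar_mult \<mu>_gen)

lemma scale_single: "scale d (Poly_Mapping.single m c) = Poly_Mapping.single m (c * d ^ length (word m))"
proof -
  have "prod_list (map (\<lambda>y. scalar d * gen y) ws) = scalar (d ^ length ws) * prod_list (map gen ws)" for ws
    by (induction ws) (simp_all add: scalar_mult_mult_scalar_mult)
  then show ?thesis
    by (simp add: scale_def subst_single prod_list_gen sum_list_word mult_single)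
qed

lemma lookup_scale: "Poly_Mapping.lookup (scale d w) m = d ^ length (word m) * Poly_Mapping.lookup w m"
proof -
  have "scale d w = (\<Sum>m'\<in>Poly_Mapping.keys w.
      Poly_Mapping.single m' (Poly_Mapping.lookup w m' * d ^ length (word m')))"
    by (subst (1) sum_single_lookup[symmetric]) (simp add: alg_End_sum[OF scale_in_alg_End] scale_single)
  then show ?thesis
    by (simp add: lookup_sum lookup_single when_def in_keys_iff mult.commute)
qed

lemma keys_subset_range_letter_if_scale_eq:
  assumes "\<And>d. scale d w = scalar d * w"
  shows "Poly_Mapping.keys w \<subseteq> range letter"
proof
  fix m
  assume "m \<in> Poly_Mapping.keys w"
  then have "Poly_Mapping.lookup w m \<noteq> 0" by (simp add: in_keys_iff)
  then have "d ^ length (word m) = d" for d :: 'a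
    using lookup_scale[of d w m] assms[of d] by (simp add: lookup_scalar_mult)
  then have "length (word m) = 1"
    using infinite_field_ex_power_neq_self[OF infinite_field] by blast
  then obtain y where "word m = [y]" by (auto simp: length_Suc_conv)
  then show "m \<in> range letter"
    using sum_list_word[of m] by auto
qed

lemma lookup_proj_letter:
  assumes "Poly_Mapping.keys w \<subseteq> range letter"
  shows "Poly_Mapping.lookup (proj y w) (letter y) = Poly_Mapping.lookup w (letter y)"
proof -
  have "Poly_Mapping.lookup (proj y (Poly_Mapping.single m c)) (letter y) = (if m = letter y then c else 0)"
    if m: "m \<in> range letter" for m c
  proof -
    obtain y' where m: "m = letter y'" using m by blast
    have "Poly_Mapping.single m c = scalar c * gen y'"
      by (simp add: m malg_gen_def mult_single)
    then have "proj y (Poly_Mapping.single m c) = scalar c * (if y' = y then gen y else 0)"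
      by (simp add: alg_End_scalar_mult[OF proj_in_alg_End] proj_gen)
    then show ?thesis
      using inj_letter by (auto simp: m malg_gen_def mult_single lookup_single when_def inj_eq)
  qed
  note single = this
  have "proj y w = (\<Sum>m\<in>Poly_Mapping.keys w. proj y (Poly_Mapping.single m (Poly_Mapping.lookup w m)))"
    using alg_End_sum[OF proj_in_alg_End, of y "\<lambda>m. Poly_Mapping.single m (Poly_Mapping.lookup w m)" "Poly_Mapping.keys w"]
    by (simp add: sum_single_lookup)
  then have "Poly_Mapping.lookup (proj y w) (letter y) = (\<Sum>m\<in>Poly_Mapping.keys w.
      Poly_Mapping.lookup (proj y (Poly_Mapping.single m (Poly_Mapping.lookup w m))) (letter y))"
    by (simp add: lookup_sum)
  also have "\<dots> = (\<Sum>m\<in>Poly_Mapping.keys w. if m = letter y then Poly_Mapping.lookup w m else 0)"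
    using assms by (intro sum.cong refl single) auto
  finally show ?thesis
    by (simp add: in_keys_iff)
qed

lemma linear_eq_if_proj_eq:
  assumes "Poly_Mapping.keys w \<subseteq> range letter" and "Poly_Mapping.keys w' \<subseteq> range letter"
    and "\<And>y. proj y w = proj y w'"
  shows "w = w'"
proof (rule poly_mapping_eqI)
  fix m
  show "Poly_Mapping.lookup w m = Poly_Mapping.lookup w' m"
  proof (cases "m \<in> range letter")
    case True
    then show ?thesis
      using lookup_proj_letter[OF assms(1)] lookup_proj_letter[OF assms(2)] assms(3) by auto
  next
    case False
    then have "m \<notin> Poly_Mapping.keys w" and "m \<notin> Poly_Mapping.keys w'"
      using assms(1,2) by auto
    then show ?thesis
      by (simp add: in_keys_iff)
  qed
qed

lemma \<mu>_gen_add_gen: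
  assumes "x1 \<noteq> x2"
  shows "\<mu> (gen x1 + gen x2) = gen x1 + gen x2"
proof (rule linear_eq_if_proj_eq)
  let ?v = "gen x1 + gen x2 :: 'm \<Rightarrow>\<^sub>0 'a"
  have scale_v: "scale d ?v = scalar d * ?v" for d
    by (simp add: alg_End_add[OF scale_in_alg_End] scale_gen distrib_left)
  show "Poly_Mapping.keys ?v \<subseteq> range letter"
    by (rule keys_subset_range_letter_if_scale_eq[OF scale_v])
  have "scale (\<sigma> c) (\<mu> ?v) = scalar (\<sigma> c) * \<mu> ?v" for c
    by (simp add: \<mu>_scale[symmetric] scale_v \<mu>_scalar_mult)
  then have "scale d (\<mu> ?v) = scalar d * \<mu> ?v" for d
    using surjD[OF surj_\<sigma>] by metis
  then show "Poly_Mapping.keys (\<mu> ?v) \<subseteq> range letter"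
    by (rule keys_subset_range_letter_if_scale_eq)
  show "proj y (\<mu> ?v) = proj y ?v" for y
  proof -
    have "proj y ?v = (if x1 = y then gen x1 else 0) + (if x2 = y then gen x2 else 0)"
      by (simp add: alg_End_add[OF proj_in_alg_End] proj_gen)
    then have "\<mu> (proj y ?v) = proj y ?v"
      using assms by (cases "x1 = y") (auto simp: \<mu>_gen \<mu>_0)
    then show ?thesis by (simp add: \<mu>_proj)
  qed
qed

lemma \<mu>_add_if_two_gens:
  fixes x1 x2 :: 'x
  assumes "x1 \<noteq> x2"
  shows "\<mu> (u + v) = \<mu> u + \<mu> v"
proof -
  let ?s = "subst (\<lambda>y. if y = x1 then u else if y = x2 then v else 0)"
  let ?t = "subst (\<lambda>y. if y = x1 then \<mu> u else if y = x2 then \<mu> v else 0)"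
  have "\<mu> (?s p) = ?t (\<mu> p)" for p
    by (rule \<mu>_intertwines) (simp_all add: subst_in_alg_End subst_gen \<mu>_0)
  from this[of "gen x1 + gen x2"] show ?thesis
    using assms by (simp add: \<mu>_gen_add_gen alg_End_add[OF subst_in_alg_End] subst_gen)
qed

lemma \<mu>_add_if_single_gen:
  fixes x0 :: 'x
  assumes "\<And>y. y = x0"
  shows "\<mu> (u + v) = \<mu> u + \<mu> v"
proof -
  have in_range: "p \<in> range (poly_at_gen x0)" for p :: "'m \<Rightarrow>\<^sub>0 'a"
  proof -
    have "p = subst gen p"
      using alg_End_eq_subst[OF id_in_alg_End, of p] by simp
    also have "\<dots> \<in> range (poly_at_gen x0)"
    proof (rule subst_in_range_poly_at_gen)
      show "gen y \<in> range (poly_at_gen x0)" for y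
        using assms[of y] by (intro range_eqI[where x = "[:0, 1:]"]) (simp add: poly_at_gen_X)
    qed
    finally show ?thesis .
  qed
  obtain qu qv where "u = poly_at_gen x0 qu" and "v = poly_at_gen x0 qv"
    using in_range[of u] in_range[of v] by blast
  then show ?thesis
    by (simp add: poly_at_gen_add[symmetric] \<mu>_poly_at_gen \<psi>_eq_map_poly map_poly_add[OF \<sigma>_0 \<sigma>_add])
qed

theorem \<mu>_add: "\<mu> (u + v) = \<mu> u + \<mu> v"
proof (cases "\<exists>x1 x2::'x. x1 \<noteq> x2")
  case True
  then show ?thesis using \<mu>_add_if_two_gens by blast
next
  case False
  then show ?thesis using \<mu>_add_if_single_gen by blast
qed

end

lemma (in free_monoid_algebra) additive_if_conjugation_preserves_End:
  fixes \<mu> :: "('m \<Rightarrow>\<^sub>0 'a::field) \<Rightarrow> ('m \<Rightarrow>\<^sub>0 'a)"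
  assumes "\<And>f::'x \<Rightarrow> ('m \<Rightarrow>\<^sub>0 'a). \<exists>s\<in>alg_End. \<forall>x. s (gen x) = f x"
    and "infinite (UNIV :: 'a set)"
    and "bij \<mu> \<and> bij_betw (\<lambda>s. \<mu> \<circ> s \<circ> inv \<mu>) (malg_End (+) 0) (malg_End (+) 0) \<and>
      \<mu> 0 = 0 \<and> \<mu> (malg_one 0) = malg_one 0 \<and> (\<forall>x. \<mu> (gen x) = gen x)"
  shows "\<mu> (u + v) = \<mu> u + \<mu> v"
proof -
  interpret End_conjugation letter \<mu>
    using assms by unfold_locales (auto simp: malg_End_eq_alg_End malg_one_def dest: bij_betwE)
  show ?thesis by (rule \<mu>_add)
qed

subsection \<open>The free commutative and the free associative algebra\<close>

lemma sum_list_singletons_mset: "sum_list (map (\<lambda>x. {#x#}) ws) = mset ws"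
  by (induction ws) simp_all

interpretation free_comm: free_monoid_algebra "\<lambda>x. {#x#}"
proof
  show "\<exists>ws. m = sum_list (map (\<lambda>x. {#x#}) ws)" for m :: "'x multiset"
    using ex_mset[of m] by (auto simp: sum_list_singletons_mset)
  show "inj (\<lambda>x::'x. {#x#})"
    by (simp add: inj_def)
  show "k = j" if "sum_list (replicate k {#x#}) = sum_list (replicate j {#x#})" for x :: 'x and k j
  proof -
    have "sum_list (replicate n {#x#}) = replicate_mset n x" for n
      by (induction n) simp_all
    then show ?thesis
      using that by (metis size_replicate_mset)
  qed
qed

lemma free_comm_substitution_exists:
  "\<exists>s\<in>alg_End. \<forall>x. s (malg_gen (\<lambda>y. {#y#}) x) = (f x :: 'x multiset \<Rightarrow>\<^sub>0 'a::comm_ring_1)"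
proof (intro bexI allI)
  have word: "prod_list (map f (free_comm.word m)) = prod_mset (image_mset f m)" for m
  proof -
    have "mset (free_comm.word m) = m"
      using free_comm.sum_list_word[of m] by (simp add: sum_list_singletons_mset)
    then show ?thesis
      by (metis mset_map prod_mset_prod_list)
  qed
  show "free_comm.subst f \<in> alg_End"
    by (rule free_comm.subst_in_alg_EndI) (simp_all add: word)
  show "free_comm.subst f (malg_gen (\<lambda>y. {#y#}) x) = f x" for x
    by (simp add: malg_gen_def free_comm.subst_single word)
qed

text \<open>Lists are made an additive monoid under append so that their monoid algebra inherits
  the ring structure of finitely supported functions on a monoid.\<close>

instantiation list :: (type) monoid_add
begin
definition zero_list_def: "0 = []"
definition plus_list_def: "xs + ys = xs @ ys"
instance by standard (simp_all add: zero_list_def plus_list_def)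
end

lemma plus_list_eq_append: "(+) = (@)"
  by (simp add: fun_eq_iff plus_list_def)

lemma sum_list_singletons_list: "sum_list (map (\<lambda>x. [x]) ws) = ws"
  by (induction ws) (simp_all add: zero_list_def plus_list_def)

interpretation free_assoc: free_monoid_algebra "\<lambda>x. [x]"
proof
  show "\<exists>ws. m = sum_list (map (\<lambda>x. [x]) ws)" for m :: "'x list"
    using sum_list_singletons_list by metis
  show "inj (\<lambda>x::'x. [x])"
    by (simp add: inj_def)
  show "k = j" if "sum_list (replicate k [x]) = sum_list (replicate j [x])" for x :: 'x and k j
  proof -
    have "sum_list (replicate n [x]) = replicate n x" for n
      by (induction n) (simp_all add: zero_list_def plus_list_def)
    then show ?thesis using that by simp
  qed
qed

lemma free_assoc_substitution_exists:
  "\<exists>s\<in>alg_End. \<forall>x. s (malg_gen (\<lambda>y. [y]) x) = (f x :: 'x list \<Rightarrow>\<^sub>0 'a::comm_ring_1)"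
proof (intro bexI allI)
  have word: "free_assoc.word m = m" for m
    using free_assoc.sum_list_word[of m] by (simp add: sum_list_singletons_list)
  show "free_assoc.subst f \<in> alg_End"
    by (rule free_assoc.subst_in_alg_EndI) (simp_all add: word plus_list_def zero_list_def)
  show "free_assoc.subst f (malg_gen (\<lambda>y. [y]) x) = f x" for x
    by (simp add: malg_gen_def free_assoc.subst_single word)
qed

theorem lemma3p4:
  assumes "infinite (UNIV :: 'a::field set)"
  shows
  \<comment> \<open>free commutative algebra P[X]\<close>
  "(\<forall>\<mu> :: ('x::finite multiset \<Rightarrow>\<^sub>0 'a) \<Rightarrow> ('x multiset \<Rightarrow>\<^sub>0 'a).
      bij \<mu> \<and>
      bij_betw (\<lambda>s. \<mu> \<circ> s \<circ> inv \<mu>) (malg_End (+) {#}) (malg_End (+) {#}) \<and>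
      \<mu> 0 = 0 \<and> \<mu> (malg_one {#}) = malg_one {#} \<and>
      (\<forall>x. \<mu> (malg_gen (\<lambda>y. {#y#}) x) = malg_gen (\<lambda>y. {#y#}) x)
      \<longrightarrow> (\<forall>u v. \<mu> (u + v) = \<mu> u + \<mu> v))
   \<and>
  \<comment> \<open>free associative algebra P<X>\<close>
   (\<forall>\<mu> :: ('x::finite list \<Rightarrow>\<^sub>0 'a) \<Rightarrow> ('x list \<Rightarrow>\<^sub>0 'a).
      bij \<mu> \<and>
      bij_betw (\<lambda>s. \<mu> \<circ> s \<circ> inv \<mu>) (malg_End (@) []) (malg_End (@) []) \<and>
      \<mu> 0 = 0 \<and> \<mu> (malg_one []) = malg_one [] \<and>
      (\<forall>x. \<mu> (malg_gen (\<lambda>y. [y]) x) = malg_gen (\<lambda>y. [y]) x)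
      \<longrightarrow> (\<forall>u v. \<mu> (u + v) = \<mu> u + \<mu> v))"
  by (intro conjI allI impI)
    (erule free_comm.additive_if_conjugation_preserves_End[OF free_comm_substitution_exists assms],
     erule free_assoc.additive_if_conjugation_preserves_End[OF free_assoc_substitution_exists assms,
       unfolded plus_list_eq_append zero_list_def])

end
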